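(* Let $G=(S,B,E)$ be an instance of the Online Bipartite Matching Problem which admits a matching of size $n$. Then for any $\alpha>0$ and any arrival order of the buyers, \[ \mathbb{P}\left[|M| < \left(1-\frac{1}{e}-\alpha\right)n\right] < e^{-2\alpha^2 n}, \] where $M$ is the random variable denoting the matching generated by \textsc{Ranking}.
   Context: Online Bipartite Matching Problem: $G=(S,B,E)$ is an undirected bipartite graph with a set $S$ of sellers (known in advance) and a set $B$ of buyers. The buyers arrive one at a time in an adversarially chosen order; when a buyer $i$ arrives, its neighborhood $N(i)\subseteq S$ is revealed, and the algorithm must irrevocably decide to match $i$ to a currently unmatched neighbor or leave it unmatched. \textsc{Ranking}: for every $j\in S$, independently sample a uniformly random rank $x_j\in[0,1]$ (before any buyer arrives); when buyer $i$ arrives, match $i$ to the unmatched $j\in N(i)$ with minimum $x_j$ (if any unmatched neighbor exists; ties occur with probability zero). $|M|$ is the number of edges of the resulting matching. *)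

theory Defs
  imports "HOL-Probability.Probability"
begin

text \<open>Edges are pairs (buyer, seller). A matching is a set of edges in which
  every buyer and every seller occurs at most once.\<close>
definition is_matching :: "('b \<times> 's) set \<Rightarrow> bool" where
  "is_matching M \<longleftrightarrow> (\<forall>(b,s)\<in>M. \<forall>(b',s')\<in>M. (b = b' \<longleftrightarrow> s = s'))"

text \<open>One step of Ranking: state = (set of matched sellers, matching so far).
  The arriving buyer b is matched to the unmatched neighbour of minimal rank
  (ties, which have probability zero, are broken arbitrarily).\<close>
definition ranking_step ::
  "('b \<times> 's) set \<Rightarrow> ('s \<Rightarrow> real) \<Rightarrow> 'b \<Rightarrow> 's set \<times> ('b \<times> 's) set \<Rightarrow> 's set \<times> ('b \<times> 's) set" where
  "ranking_step E x b st =
     (let C = {s. (b, s) \<in> E \<and> s \<notin> fst st} in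
      if C = {} then st
      else let s = (ARG_MIN x s. s \<in> C) in (insert s (fst st), insert (b, s) (snd st)))"

definition ranking :: "('b \<times> 's) set \<Rightarrow> ('s \<Rightarrow> real) \<Rightarrow> 'b list \<Rightarrow> ('b \<times> 's) set" where
  "ranking E x bs = snd (fold (ranking_step E x) bs ({}, {}))"

definition rank_space :: "'s set \<Rightarrow> ('s \<Rightarrow> real) measure" where
  "rank_space S = PiM S (\<lambda>_. uniform_measure lborel {0..1::real})"

end

theory Submission
  imports Defs
begin

(* Let M* be a matching of size n and E* the edges of E between vertices of M*. Ranking on E*
   matches at most as many buyers as Ranking on E, so it suffices to analyse E*.

   Expectation (the primal-dual argument of Devanur, Jain and Kleinberg): whenever a buyer is
   matched to a seller of rank y, split the gain 1 into e^(y-1) for the seller and 1 - e^(y-1) for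
   the buyer. For an edge (i, j) of M*, let c be the rank of the partner of i when j is removed.
   Whatever the rank y of j, the partner of i has rank at most c, and if y < c then j is matched.
   Averaging over y alone, the pair earns at least 1 - e^(c-1) + (e^(c-1) - e^(-1)) = 1 - 1/e,
   so the expected size of the matching is at least (1 - 1/e) n.

   Concentration: changing the rank of one seller changes the size of the matching on E* by at
   most one, and not at all for sellers outside M*, so McDiarmid's inequality bounds the
   probability of falling t below the mean by exp (-2 t^2 / n). Ties between ranks have
   probability zero; breaking them by a fixed order makes the bounded differences hold everywhere. *)

section \<open>Ranking as a deterministic process\<close>

definition free_nbrs :: "('b \<times> 's) set \<Rightarrow> 'b \<Rightarrow> 's set \<Rightarrow> 's set" where
  "free_nbrs E b A = {s. (b, s) \<in> E \<and> s \<notin> A}"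

definition ranking_state :: "('b \<times> 's) set \<Rightarrow> ('s \<Rightarrow> real) \<Rightarrow> 'b list \<Rightarrow> 's set \<times> ('b \<times> 's) set" where
  "ranking_state E x bs = fold (ranking_step E x) bs ({}, {})"

lemma fold_simulation:
  assumes "R s t" and "\<And>a s t. a \<in> set xs \<Longrightarrow> R s t \<Longrightarrow> R (f a s) (g a t)"
  shows "R (fold f xs s) (fold g xs t)"
  using assms by (induction xs arbitrary: s t) auto

lemma arg_min_on_eqI:
  fixes x :: "'a \<Rightarrow> 'b::order"
  assumes "inj_on x C" "s \<in> C" "\<And>t. t \<in> C \<Longrightarrow> x s \<le> x t"
  shows "arg_min_on x C = s"
  unfolding arg_min_on_def by (rule arg_min_inj_eq) (use assms in simp_all)

lemma free_nbrs_subset: "free_nbrs E b A \<subseteq> snd ` E"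
  unfolding free_nbrs_def by (auto intro: rev_image_eqI)

lemma ranking_step_eq:
  "ranking_step E x b (A, M) =
    (if free_nbrs E b A = {} then (A, M)
     else (insert (arg_min_on x (free_nbrs E b A)) A, insert (b, arg_min_on x (free_nbrs E b A)) M))"
  by (simp only: ranking_step_def Let_def fst_conv snd_conv free_nbrs_def arg_min_on_def)

lemma ranking_step_cases [consumes 1]:
  assumes "finite E"
  obtains (no_free_nbr) "free_nbrs E b A = {}" "ranking_step E x b (A, M) = (A, M)"
  | (match) s where "s \<in> free_nbrs E b A" "\<And>t. t \<in> free_nbrs E b A \<Longrightarrow> x s \<le> x t"
      "ranking_step E x b (A, M) = (insert s A, insert (b, s) M)"
proof (cases "free_nbrs E b A = {}")
  case True
  show ?thesis
    by (rule that(1)) (use True in \<open>simp_all add: ranking_step_eq\<close>)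
next
  case False
  have fin: "finite (free_nbrs E b A)"
    by (rule finite_subset[OF free_nbrs_subset finite_imageI[OF assms]])
  define s where "s = arg_min_on x (free_nbrs E b A)"
  show ?thesis
  proof (rule that(2))
    show "s \<in> free_nbrs E b A"
      unfolding s_def by (rule arg_min_if_finite(1)[OF fin False])
    show "x s \<le> x t" if "t \<in> free_nbrs E b A" for t
      unfolding s_def by (rule arg_min_least[OF fin False that])
    show "ranking_step E x b (A, M) = (insert s A, insert (b, s) M)"
      unfolding ranking_step_eq s_def using False by simp
  qed
qed

lemma ranking_step_mono:
  "fst st \<subseteq> fst (ranking_step E x b st) \<and> snd st \<subseteq> snd (ranking_step E x b st)"
  by (cases st) (auto simp: ranking_step_eq)

lemma fold_ranking_step_mono:
  "fst st \<subseteq> fst (fold (ranking_step E x) bs st) \<and> snd st \<subseteq> snd (fold (ranking_step E x) bs st)"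
proof (induction bs arbitrary: st)
  case (Cons b bs)
  show ?case
    using Cons.IH[of "ranking_step E x b st"] ranking_step_mono[of st E x b]
    by (simp only: fold_Cons comp_def) blast
qed simp

definition consistent_state :: "('b \<times> 's) set \<Rightarrow> 's set \<times> ('b \<times> 's) set \<Rightarrow> bool" where
  "consistent_state E st \<longleftrightarrow>
     fst st = snd ` snd st \<and> inj_on snd (snd st) \<and> finite (snd st) \<and> snd st \<subseteq> E"

lemma consistent_state_ranking_state:
  fixes E :: "('b \<times> 's) set"
  assumes "finite E"
  shows "consistent_state E (ranking_state E x bs)"
  unfolding ranking_state_def
proof (rule fold_invariant[where Q = "\<lambda>_. True"])
  fix b and st :: "'s set \<times> ('b \<times> 's) set"
  assume inv: "consistent_state E st"
  obtain A M where st: "st = (A, M)" by fastforce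
  have A: "A = snd ` M" and inj: "inj_on snd M" and fin: "finite M" and sub: "M \<subseteq> E"
    using inv by (simp_all add: st consistent_state_def)
  show "consistent_state E (ranking_step E x b st)"
    using assms
  proof (cases rule: ranking_step_cases[of E b A x M])
    case no_free_nbr
    then show ?thesis using inv by (simp add: st)
  next
    case (match s)
    then have "(b, s) \<in> E" "s \<notin> snd ` M" by (simp_all add: free_nbrs_def A)
    then show ?thesis
      using A inj fin sub match(3) by (simp add: st consistent_state_def image_iff)
  qed
qed (auto simp: consistent_state_def)

lemma ranking_eq_snd_ranking_state: "ranking E x bs = snd (ranking_state E x bs)"
  by (simp add: ranking_def ranking_state_def)

lemma ranking_subset: "finite E \<Longrightarrow> ranking E x bs \<subseteq> E"
  using consistent_state_ranking_state[of E x bs]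
  by (simp add: ranking_eq_snd_ranking_state consistent_state_def)

lemma finite_ranking: "finite E \<Longrightarrow> finite (ranking E x bs)"
  using ranking_subset finite_subset by metis

lemma matched_sellers_ranking_state:
  "finite E \<Longrightarrow> fst (ranking_state E x bs) = snd ` ranking E x bs"
  using consistent_state_ranking_state[of E x bs]
  by (simp add: ranking_eq_snd_ranking_state consistent_state_def)

lemma card_matched_sellers:
  "finite E \<Longrightarrow> card (fst (ranking_state E x bs)) = card (ranking E x bs)"
  using consistent_state_ranking_state[of E x bs]
  by (simp add: ranking_eq_snd_ranking_state consistent_state_def card_image)

lemma ranking_cong_order:
  assumes "\<And>s t. s \<in> snd ` E \<Longrightarrow> t \<in> snd ` E \<Longrightarrow> x s < x t \<longleftrightarrow> x' s < x' t"
  shows "ranking E x bs = ranking E x' bs"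
proof -
  have "arg_min_on x (free_nbrs E b A) = arg_min_on x' (free_nbrs E b A)" for b A
  proof -
    have "is_arg_min x (\<lambda>s. s \<in> free_nbrs E b A) = is_arg_min x' (\<lambda>s. s \<in> free_nbrs E b A)"
      using free_nbrs_subset[of E b A] assms unfolding is_arg_min_def by blast
    then show ?thesis unfolding arg_min_on_def arg_min_def by simp
  qed
  then have "ranking_step E x = ranking_step E x'"
    by (intro ext) (auto simp: ranking_step_eq)
  then show ?thesis unfolding ranking_def by simp
qed

section \<open>Deleting sellers and buyers\<close>

definition delete_sellers :: "('b \<times> 's) set \<Rightarrow> 's set \<Rightarrow> ('b \<times> 's) set" where
  "delete_sellers E D = {e \<in> E. snd e \<notin> D}"

definition restrict_buyers :: "('b \<times> 's) set \<Rightarrow> 'b set \<Rightarrow> ('b \<times> 's) set" where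
  "restrict_buyers E B' = {e \<in> E. fst e \<in> B'}"

lemma finite_delete_sellers: "finite E \<Longrightarrow> finite (delete_sellers E D)"
  by (simp add: delete_sellers_def)

lemma finite_restrict_buyers: "finite E \<Longrightarrow> finite (restrict_buyers E B')"
  by (simp add: restrict_buyers_def)

definition seller_deletion_rel ::
  "'s set \<Rightarrow> ('s \<Rightarrow> real) \<Rightarrow> 's set \<times> ('b \<times> 's) set \<Rightarrow> 's set \<times> ('b \<times> 's) set \<Rightarrow> bool" where
  "seller_deletion_rel D x st st' \<longleftrightarrow>
     fst st - D \<subseteq> fst st' \<and> card (fst st') \<le> card (fst st) \<and> finite (fst st) \<and> finite (fst st') \<and>
     (\<forall>b s'. (b, s') \<in> snd st' \<longrightarrow> (\<exists>s. (b, s) \<in> snd st \<and> x s \<le> x s'))"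

lemma free_nbrs_delete_sellers_subset:
  "A - D \<subseteq> A' \<Longrightarrow> free_nbrs (delete_sellers E D) b A' \<subseteq> free_nbrs E b A"
  by (auto simp: free_nbrs_def delete_sellers_def)

lemma delete_sellers_choice:
  fixes x :: "'s \<Rightarrow> real"
  assumes inj: "inj_on x (snd ` E)" and AA': "A - D \<subseteq> A'"
    and s: "s \<in> free_nbrs E b A" "\<And>t. t \<in> free_nbrs E b A \<Longrightarrow> x s \<le> x t"
    and s': "s' \<in> free_nbrs (delete_sellers E D) b A'"
      "\<And>t. t \<in> free_nbrs (delete_sellers E D) b A' \<Longrightarrow> x s' \<le> x t"
  shows "x s \<le> x s'" and "s \<in> D \<union> A' \<union> {s'}"
proof -
  have sub: "free_nbrs (delete_sellers E D) b A' \<subseteq> free_nbrs E b A"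
    using AA' by (rule free_nbrs_delete_sellers_subset)
  then show le: "x s \<le> x s'" using s(2) s'(1) by blast
  show "s \<in> D \<union> A' \<union> {s'}"
  proof (rule ccontr)
    assume "s \<notin> D \<union> A' \<union> {s'}"
    then have "s \<in> free_nbrs (delete_sellers E D) b A'" "s \<noteq> s'"
      using s(1) by (auto simp: free_nbrs_def delete_sellers_def)
    moreover have "s \<in> snd ` E" "s' \<in> snd ` E"
      using s(1) s'(1) sub free_nbrs_subset[of E b A] by blast+
    ultimately show False
      using s'(2) le inj by (metis antisym inj_onD)
  qed
qed

lemma seller_deletion_rel_step:
  fixes x :: "'s \<Rightarrow> real" and E :: "('b \<times> 's) set"
  assumes fin: "finite E" and inj: "inj_on x (snd ` E)" and rel: "seller_deletion_rel D x st st'"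
  shows "seller_deletion_rel D x (ranking_step E x b st) (ranking_step (delete_sellers E D) x b st')"
proof -
  obtain A M A' M' where st: "st = (A, M)" and st': "st' = (A', M')" by fastforce
  have AA': "A - D \<subseteq> A'" and card: "card A' \<le> card A" and finA: "finite A" "finite A'"
    and partner: "\<forall>b s'. (b, s') \<in> M' \<longrightarrow> (\<exists>s. (b, s) \<in> M \<and> x s \<le> x s')"
    using rel by (simp_all add: seller_deletion_rel_def st st')
  show ?thesis
  using fin proof (cases rule: ranking_step_cases[of E b A x M])
    case no_free_nbr
    then have "free_nbrs (delete_sellers E D) b A' = {}"
      using free_nbrs_delete_sellers_subset[OF AA', of E b] by blast
    then show ?thesis using no_free_nbr rel by (simp add: st st' ranking_step_eq)
  next
    case (match s)
    have card_s: "card (insert s A) = Suc (card A)"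
      using match(1) finA(1) by (simp add: free_nbrs_def)
    show ?thesis
    using finite_delete_sellers[OF fin]
    proof (cases rule: ranking_step_cases[of "delete_sellers E D" b A' x M'])
      case no_free_nbr
      then have "s \<in> D \<union> A'"
        using match(1) by (auto simp: free_nbrs_def delete_sellers_def)
      then show ?thesis
        using AA' card card_s finA partner match(3) no_free_nbr(2)
        by (simp add: seller_deletion_rel_def st st') blast
    next
      case match': (match s')
      note choice = delete_sellers_choice[OF inj AA' match(1,2) match'(1,2)]
      have "card (insert s' A') \<le> card (insert s A)"
        using card card_s finA(2) by (simp add: card_insert_if)
      then show ?thesis
        using AA' choice finA partner match(3) match'(3)
        by (simp add: seller_deletion_rel_def st st') blast
    qed
  qed
qed

lemma seller_deletion_rel_ranking_state:
  assumes "finite E" and "inj_on x (snd ` E)"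
  shows "seller_deletion_rel D x (ranking_state E x bs) (ranking_state (delete_sellers E D) x bs)"
  unfolding ranking_state_def
proof (rule fold_simulation)
  show "seller_deletion_rel D x ({}, {}) ({}, {})" by (simp add: seller_deletion_rel_def)
qed (rule seller_deletion_rel_step[OF assms])

lemma card_ranking_delete_sellers_le:
  assumes "finite E" and "inj_on x (snd ` E)"
  shows "card (ranking (delete_sellers E D) x bs) \<le> card (ranking E x bs)"
  using seller_deletion_rel_ranking_state[OF assms, of D bs]
  by (simp add: seller_deletion_rel_def card_matched_sellers assms(1) finite_delete_sellers)

lemma card_ranking_le_delete_sellers:
  assumes "finite E" and "inj_on x (snd ` E)" and "finite D"
  shows "card (ranking E x bs) \<le> card (ranking (delete_sellers E D) x bs) + card D"
proof -
  let ?A = "fst (ranking_state E x bs)" and ?A' = "fst (ranking_state (delete_sellers E D) x bs)"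
  have "?A \<subseteq> ?A' \<union> D" and "finite ?A'"
    using seller_deletion_rel_ranking_state[OF assms(1,2), of D bs]
    by (auto simp: seller_deletion_rel_def)
  then have "card ?A \<le> card (?A' \<union> D)"
    using assms(3) by (intro card_mono) simp_all
  also have "\<dots> \<le> card ?A' + card D" by (rule card_Un_le)
  finally show ?thesis
    by (simp add: card_matched_sellers assms(1) finite_delete_sellers)
qed

lemma ranking_delete_sellers_partner:
  assumes "finite E" and "inj_on x (snd ` E)" and "(b, s') \<in> ranking (delete_sellers E D) x bs"
  shows "\<exists>s. (b, s) \<in> ranking E x bs \<and> x s \<le> x s'"
  using seller_deletion_rel_ranking_state[OF assms(1,2), of D bs] assms(3)
  by (simp add: seller_deletion_rel_def ranking_eq_snd_ranking_state)

lemma restrict_buyers_step: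
  fixes x :: "'s \<Rightarrow> real" and E :: "('b \<times> 's) set"
  assumes fin: "finite E" and inj: "inj_on x (snd ` E)" and AA': "fst st' \<subseteq> fst st"
  shows "fst (ranking_step (restrict_buyers E B') x b st') \<subseteq> fst (ranking_step E x b st)"
proof -
  obtain A M A' M' where st: "st = (A, M)" and st': "st' = (A', M')" by fastforce
  have mono: "A \<subseteq> fst (ranking_step E x b (A, M))" using ranking_step_mono[of "(A, M)"] by simp
  show ?thesis
  using finite_restrict_buyers[OF fin]
  proof (cases rule: ranking_step_cases[of "restrict_buyers E B'" b A' x M'])
    case no_free_nbr
    then show ?thesis using AA' mono by (simp add: st st')
  next
    case match': (match s')
    have "s' \<in> fst (ranking_step E x b (A, M))"
    proof (cases "s' \<in> A")
      case False
      have "b \<in> B'" "(b, s') \<in> E"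
        using match'(1) by (simp_all add: free_nbrs_def restrict_buyers_def)
      then have sub: "free_nbrs E b A \<subseteq> free_nbrs (restrict_buyers E B') b A'"
        using AA' by (auto simp: free_nbrs_def restrict_buyers_def st st')
      have s'_free: "s' \<in> free_nbrs E b A"
        using False \<open>(b, s') \<in> E\<close> by (simp add: free_nbrs_def)
      show ?thesis
      using fin proof (cases rule: ranking_step_cases[of E b A x M])
        case no_free_nbr
        then show ?thesis using s'_free by blast
      next
        case (match s)
        have "x s = x s'"
          using match(2)[OF s'_free] match'(2)[OF subsetD[OF sub match(1)]] by simp
        moreover have "s \<in> snd ` E" "s' \<in> snd ` E"
          using match(1) s'_free free_nbrs_subset[of E b A] by blast+
        ultimately have "s = s'" using inj by (simp add: inj_on_eq_iff)
        then show ?thesis using match(3) by simp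
      qed
    qed (use mono in blast)
    then show ?thesis using AA' mono match'(3) by (simp add: st st')
  qed
qed

lemma card_ranking_restrict_buyers_le:
  assumes "finite E" and "inj_on x (snd ` E)"
  shows "card (ranking (restrict_buyers E B') x bs) \<le> card (ranking E x bs)"
proof -
  have "fst (ranking_state (restrict_buyers E B') x bs) \<subseteq> fst (ranking_state E x bs)"
    unfolding ranking_state_def
    by (rule fold_simulation[where R = "\<lambda>st st'. fst st \<subseteq> fst st'"])
      (simp_all add: restrict_buyers_step[OF assms])
  moreover have "finite (fst (ranking_state E x bs))"
    using finite_ranking[OF assms(1)] by (simp add: matched_sellers_ranking_state[OF assms(1)])
  ultimately have "card (fst (ranking_state (restrict_buyers E B') x bs)) \<le> card (fst (ranking_state E x bs))"
    by (intro card_mono)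
  then show ?thesis
    by (simp add: card_matched_sellers assms(1) finite_restrict_buyers)
qed

lemma ranking_delete_unmatched_seller:
  fixes x :: "'s \<Rightarrow> real" and E :: "('b \<times> 's) set"
  assumes fin: "finite E" and inj: "inj_on x (snd ` E)" and j: "j \<notin> snd ` ranking E x bs"
  shows "ranking (delete_sellers E {j}) x bs = ranking E x bs"
proof -
  have step: "ranking_step E x b st = ranking_step (delete_sellers E {j}) x b st"
    if "j \<notin> fst (ranking_step E x b st)" for b st
  proof -
    obtain A M where st: "st = (A, M)" by fastforce
    have free: "free_nbrs (delete_sellers E {j}) b A = free_nbrs E b A - {j}"
      by (auto simp: free_nbrs_def delete_sellers_def)
    show ?thesis
    using fin proof (cases rule: ranking_step_cases[of E b A x M])
      case no_free_nbr
      then show ?thesis by (simp add: st ranking_step_eq free)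
    next
      case (match s)
      have "s \<noteq> j" using that match(3) by (auto simp: st)
      have "arg_min_on x (free_nbrs E b A - {j}) = s"
      proof (rule arg_min_on_eqI)
        show "inj_on x (free_nbrs E b A - {j})"
          by (rule inj_on_subset[OF inj]) (use free_nbrs_subset[of E b A] in blast)
      qed (use match(1,2) \<open>s \<noteq> j\<close> in auto)
      then show ?thesis using match(1,3) \<open>s \<noteq> j\<close> by (auto simp: st ranking_step_eq free)
    qed
  qed
  have "j \<notin> fst (ranking_state E x bs) \<longrightarrow>
      ranking_state E x bs = ranking_state (delete_sellers E {j}) x bs"
    unfolding ranking_state_def
  proof (rule fold_simulation)
    fix b and st st' :: "'s set \<times> ('b \<times> 's) set"
    assume "j \<notin> fst st \<longrightarrow> st = st'"
    then show "j \<notin> fst (ranking_step E x b st) \<longrightarrow>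
        ranking_step E x b st = ranking_step (delete_sellers E {j}) x b st'"
      using step ranking_step_mono[of st E x b] by blast
  qed simp
  then show ?thesis
    using j by (simp add: matched_sellers_ranking_state[OF fin] ranking_eq_snd_ranking_state)
qed

lemma ranking_unmatched_nbr:
  fixes x :: "'s \<Rightarrow> real" and E :: "('b \<times> 's) set"
  assumes fin: "finite E" and ij: "(i, j) \<in> E" and i: "i \<in> set bs"
    and j: "j \<notin> snd ` ranking E x bs"
  shows "\<exists>s. (i, s) \<in> ranking E x bs \<and> x s \<le> x j"
proof -
  obtain xs ys where bs: "bs = xs @ i # ys" using split_list[OF i] by blast
  obtain A M where before: "fold (ranking_step E x) xs ({}, {}) = (A, M)" by fastforce
  let ?st = "ranking_step E x i (A, M)"
  have final: "ranking_state E x bs = fold (ranking_step E x) ys ?st"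
    by (simp add: ranking_state_def bs before)
  have later: "fst ?st \<subseteq> fst (ranking_state E x bs)" "snd ?st \<subseteq> ranking E x bs"
    using fold_ranking_step_mono[of ?st E x ys] by (simp_all add: final ranking_eq_snd_ranking_state)
  have "j \<notin> A"
    using j later(1) ranking_step_mono[of "(A, M)" E x i] by (auto simp: matched_sellers_ranking_state[OF fin])
  then have j_free: "j \<in> free_nbrs E i A" using ij by (simp add: free_nbrs_def)
  show ?thesis
  using fin proof (cases rule: ranking_step_cases[of E i A x M])
    case no_free_nbr
    then show ?thesis using j_free by blast
  next
    case (match s)
    then show ?thesis using later(2) j_free by auto
  qed
qed

lemma card_ranking_change_one_rank:
  fixes x x' :: "'s \<Rightarrow> real"
  assumes fin: "finite E" and inj: "inj_on x (snd ` E)" and inj': "inj_on x' (snd ` E)"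
    and order: "\<And>s t. s \<in> snd ` E - {j} \<Longrightarrow> t \<in> snd ` E - {j} \<Longrightarrow> x s < x t \<longleftrightarrow> x' s < x' t"
  shows "\<bar>real (card (ranking E x bs)) - real (card (ranking E x' bs))\<bar> \<le> 1"
proof -
  let ?E = "delete_sellers E {j}"
  have "snd ` ?E \<subseteq> snd ` E - {j}" by (auto simp: delete_sellers_def)
  then have "ranking ?E x bs = ranking ?E x' bs"
    using order by (intro ranking_cong_order) blast
  then show ?thesis
    using card_ranking_delete_sellers_le[OF fin inj, of "{j}" bs]
      card_ranking_le_delete_sellers[OF fin inj, of "{j}" bs]
      card_ranking_delete_sellers_le[OF fin inj', of "{j}" bs]
      card_ranking_le_delete_sellers[OF fin inj', of "{j}" bs]
    by simp
qed

section \<open>Random ranks\<close>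

abbreviation uniform01 :: "real measure" where
  "uniform01 \<equiv> uniform_measure lborel {0..1}"

lemma prob_space_uniform01: "prob_space uniform01"
  by (rule prob_space_uniform_measure) auto

lemma product_prob_space_uniform01: "product_prob_space (\<lambda>_. uniform01)"
  by (simp add: product_prob_space_def product_prob_space_axioms_def product_sigma_finite_def
      prob_space_uniform01 prob_space_imp_sigma_finite)

lemma prob_space_rank_space: "prob_space (rank_space S)"
  unfolding rank_space_def by (intro prob_space_PiM prob_space_uniform01)

lemma rank_measurable: "(\<lambda>x. x s) \<in> borel_measurable (rank_space S)"
proof (cases "s \<in> S")
  case True
  then have "(\<lambda>x. x s) \<in> measurable (rank_space S) uniform01"
    unfolding rank_space_def by (rule measurable_component_singleton)
  then show ?thesis
    by (simp add: measurable_cong_sets[OF refl sets_uniform_measure])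
next
  case False
  show ?thesis
  proof (rule measurableI)
    fix A :: "real set"
    have "(\<lambda>x. x s) -` A \<inter> space (rank_space S) =
        (if undefined \<in> A then space (rank_space S) else {})"
      using False by (auto simp: rank_space_def space_PiM PiE_def extensional_def)
    then show "(\<lambda>x. x s) -` A \<inter> space (rank_space S) \<in> sets (rank_space S)" by simp
  qed simp
qed

definition same_order_on :: "'s set \<Rightarrow> ('s \<Rightarrow> real) \<Rightarrow> ('s \<Rightarrow> real) \<Rightarrow> bool" where
  "same_order_on S x y \<longleftrightarrow> (\<forall>s\<in>S. \<forall>t\<in>S. x s < x t \<longleftrightarrow> y s < y t)"

lemma sets_rank_space_order_pattern:
  assumes "finite S"
  shows "{x \<in> space (rank_space S). \<forall>p\<in>S \<times> S. x (fst p) < x (snd p) \<longleftrightarrow> p \<in> P} \<in> sets (rank_space S)"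
proof -
  have "Measurable.pred (rank_space S) (\<lambda>x. (x a < x b) = c)" for a b c
  proof -
    have "Measurable.pred (rank_space S) (\<lambda>x. x a < x b)"
      using rank_measurable by measurable
    then show ?thesis by (cases c) (simp_all add: pred_intros_logic)
  qed
  then have "Measurable.pred (rank_space S) (\<lambda>x. \<forall>p\<in>S \<times> S. (x (fst p) < x (snd p)) = (p \<in> P))"
    using assms by (intro pred_intros_finite) simp_all
  then show ?thesis by (simp add: pred_def)
qed

text \<open>The preimage of a measurable set is the union of the finitely many order classes it meets.\<close>
lemma measurable_order_invariant:
  assumes fin: "finite S"
    and inv: "\<And>x y. same_order_on S x y \<Longrightarrow> F x = F y"
    and range: "\<And>x. x \<in> space (rank_space S) \<Longrightarrow> F x \<in> space N"
  shows "F \<in> measurable (rank_space S) N"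
proof (rule measurableI)
  fix A
  let ?F = "F -` A \<inter> space (rank_space S)"
  define pattern where "pattern x = {p \<in> S \<times> S. x (fst p) < (x (snd p) :: real)}" for x
  define order_class where "order_class P = {x \<in> space (rank_space S). pattern x = P}" for P
  have preimage: "?F = (\<Union>P \<in> pattern ` ?F. order_class P)"
  proof (intro set_eqI iffI)
    fix x assume "x \<in> (\<Union>P \<in> pattern ` ?F. order_class P)"
    then obtain y where y: "y \<in> ?F" and x: "x \<in> order_class (pattern y)"
      by blast
    then have "same_order_on S x y"
      by (auto simp: order_class_def pattern_def same_order_on_def set_eq_iff)
    then show "x \<in> ?F"
      using inv[of x y] x y by (simp add: order_class_def)
  qed (auto simp: order_class_def)
  have "order_class (pattern y) =
      {x \<in> space (rank_space S). \<forall>p\<in>S \<times> S. x (fst p) < x (snd p) \<longleftrightarrow> p \<in> pattern y}" for y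
    unfolding order_class_def pattern_def by (auto simp: set_eq_iff)
  then have "order_class P \<in> sets (rank_space S)" if "P \<in> pattern ` ?F" for P
    using that sets_rank_space_order_pattern[OF fin] by auto
  moreover have "finite (pattern ` ?F)"
    by (rule finite_subset[of _ "Pow (S \<times> S)"]) (use fin in \<open>auto simp: pattern_def\<close>)
  ultimately show "?F \<in> sets (rank_space S)"
    by (subst preimage) (intro sets.finite_UN)
qed (rule range)

lemma measurable_card_ranking[measurable]:
  assumes "finite S" and "snd ` E \<subseteq> S"
  shows "(\<lambda>x. real (card (ranking E x bs))) \<in> borel_measurable (rank_space S)"
proof (rule measurable_order_invariant[OF assms(1)])
  fix x y assume "same_order_on S x y"
  then have "ranking E x bs = ranking E y bs"
    using assms(2) by (intro ranking_cong_order) (auto simp: same_order_on_def)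
  then show "real (card (ranking E x bs)) = real (card (ranking E y bs))" by simp
qed simp

lemma measurable_mem_ranking[measurable]:
  assumes "finite S" and "snd ` E \<subseteq> S"
  shows "Measurable.pred (rank_space S) (\<lambda>x. e \<in> ranking E x bs)"
proof (rule measurable_order_invariant[OF assms(1)])
  fix x y assume "same_order_on S x y"
  then show "(e \<in> ranking E x bs) = (e \<in> ranking E y bs)"
    using assms(2) by (subst ranking_cong_order[of E x y]) (auto simp: same_order_on_def)
qed simp

lemma rank_space_tie_null:
  assumes fin: "finite S" and s: "s \<in> S" and st: "s \<noteq> t"
  shows "{x \<in> space (rank_space S). x s = x t} \<in> null_sets (rank_space S)"
proof -
  interpret product_prob_space "\<lambda>_. uniform01" S by (rule product_prob_space_uniform01)
  let ?P = "PiM (insert s (S - {s})) (\<lambda>_. uniform01)"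
  let ?tie = "{x \<in> space (rank_space S). x s = x t}"
  have P: "rank_space S = ?P" using s by (simp add: rank_space_def insert_absorb)
  have tie: "?tie \<in> sets ?P"
    unfolding P[symmetric] using rank_measurable by measurable
  have "emeasure ?P ?tie = (\<integral>\<^sup>+x. indicator ?tie x \<partial>?P)"
    using tie by simp
  also have "\<dots> = (\<integral>\<^sup>+x. (\<integral>\<^sup>+y. indicator ?tie (x(s := y)) \<partial>uniform01) \<partial>PiM (S - {s}) (\<lambda>_. uniform01))"
    by (rule product_nn_integral_insert) (use fin tie in auto)
  also have "\<dots> = (\<integral>\<^sup>+x. 0 \<partial>PiM (S - {s}) (\<lambda>_. uniform01))"
  proof (rule nn_integral_cong)
    fix x
    have "(\<integral>\<^sup>+y. indicator ?tie (x(s := y)) \<partial>uniform01) \<le> (\<integral>\<^sup>+y. indicator {x t} y \<partial>uniform01)"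
      by (rule nn_integral_mono) (use st in \<open>auto split: split_indicator\<close>)
    also have "\<dots> = 0"
      using emeasure_mono[of "{0..1} \<inter> {x t}" "{x t}" lborel] by simp
    finally show "(\<integral>\<^sup>+y. indicator ?tie (x(s := y)) \<partial>uniform01) = 0" by simp
  qed
  finally show ?thesis using tie by (simp add: null_sets_def P)
qed

lemma AE_rank_space_inj:
  assumes "finite S"
  shows "AE x in rank_space S. inj_on x S"
proof -
  have "AE x in rank_space S. \<forall>p\<in>S \<times> S. fst p \<noteq> snd p \<longrightarrow> x (fst p) \<noteq> x (snd p)"
  proof (rule AE_finite_allI)
    fix p assume "p \<in> S \<times> S"
    show "AE x in rank_space S. fst p \<noteq> snd p \<longrightarrow> x (fst p) \<noteq> x (snd p)"
    proof (cases "fst p = snd p")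
      case False
      with \<open>p \<in> S \<times> S\<close> show ?thesis
        by (intro AE_I'[OF rank_space_tie_null[OF assms, of "fst p" "snd p"]]) auto
    qed simp
  qed (use assms in simp)
  then show ?thesis by eventually_elim (auto simp: inj_on_def)
qed

section \<open>Breaking ties\<close>

definition tie_break_less :: "'s set \<Rightarrow> ('s \<Rightarrow> real) \<Rightarrow> 's \<Rightarrow> 's \<Rightarrow> bool" where
  "tie_break_less T x s t \<longleftrightarrow> x s < x t \<or> (x s = x t \<and> to_nat_on T s < to_nat_on T t)"

definition tie_break :: "'s set \<Rightarrow> ('s \<Rightarrow> real) \<Rightarrow> 's \<Rightarrow> real" where
  "tie_break T x s = (if s \<in> T then real (card {t \<in> T. tie_break_less T x t s}) else 0)"

lemma tie_break_less_trans:
  "tie_break_less T x r s \<Longrightarrow> tie_break_less T x s t \<Longrightarrow> tie_break_less T x r t"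
  unfolding tie_break_less_def by auto

lemma tie_break_less_irrefl: "\<not> tie_break_less T x s s"
  unfolding tie_break_less_def by auto

lemma tie_break_less_total:
  assumes "finite T" "s \<in> T" "t \<in> T" "s \<noteq> t"
  shows "tie_break_less T x s t \<or> tie_break_less T x t s"
proof -
  have "to_nat_on T s \<noteq> to_nat_on T t"
    using assms inj_on_to_nat_on[OF countable_finite[OF assms(1)]] by (auto dest: inj_onD)
  then show ?thesis unfolding tie_break_less_def by linarith
qed

lemma tie_break_strict_mono:
  assumes "finite T" "s \<in> T" "t \<in> T" "tie_break_less T x s t"
  shows "tie_break T x s < tie_break T x t"
proof -
  have "{u \<in> T. tie_break_less T x u s} \<subset> {u \<in> T. tie_break_less T x u t}"
    using assms tie_break_less_trans[of T x _ s t] tie_break_less_irrefl[of T x s] by blast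
  then have "card {u \<in> T. tie_break_less T x u s} < card {u \<in> T. tie_break_less T x u t}"
    using assms(1) by (intro psubset_card_mono) simp_all
  then show ?thesis using assms(2,3) by (simp add: tie_break_def)
qed

lemma tie_break_less_iff:
  assumes "finite T" "s \<in> T" "t \<in> T"
  shows "tie_break T x s < tie_break T x t \<longleftrightarrow> tie_break_less T x s t"
  using tie_break_strict_mono[OF assms] tie_break_strict_mono[OF assms(1,3,2)]
    tie_break_less_total[OF assms] by force

lemma inj_on_tie_break: "finite T \<Longrightarrow> inj_on (tie_break T x) T"
  by (rule inj_onI) (metis tie_break_less_total tie_break_strict_mono less_irrefl)

lemma tie_break_less_iff_inj:
  assumes "finite T" "inj_on x T" "s \<in> T" "t \<in> T"
  shows "tie_break T x s < tie_break T x t \<longleftrightarrow> x s < x t"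
  using assms by (auto simp: tie_break_less_iff tie_break_less_def inj_on_eq_iff)

lemma tie_break_fun_upd_less_iff:
  assumes "finite T" "s \<in> T - {j}" "t \<in> T - {j}"
  shows "tie_break T (x(j := z)) s < tie_break T (x(j := z)) t \<longleftrightarrow> tie_break T x s < tie_break T x t"
  using assms by (simp add: tie_break_less_iff tie_break_less_def)

lemma tie_break_cong:
  assumes "same_order_on T x y"
  shows "tie_break T x = tie_break T y"
proof
  fix s
  have "tie_break_less T x t s \<longleftrightarrow> tie_break_less T y t s" if "s \<in> T" "t \<in> T" for t
  proof -
    have "x t < x s \<longleftrightarrow> y t < y s" "x s < x t \<longleftrightarrow> y s < y t"
      using assms that by (auto simp: same_order_on_def)
    then show ?thesis unfolding tie_break_less_def by (metis linorder_neqE_linordered_idom)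
  qed
  then show "tie_break T x s = tie_break T y s"
    unfolding tie_break_def by (metis (mono_tags, lifting) Collect_cong)
qed

section \<open>McDiarmid's inequality\<close>

definition bounded_differences ::
  "('i \<Rightarrow> 'a measure) \<Rightarrow> 'i set \<Rightarrow> (('i \<Rightarrow> 'a) \<Rightarrow> real) \<Rightarrow> ('i \<Rightarrow> real) \<Rightarrow> bool" where
  "bounded_differences M I f c \<longleftrightarrow>
     (\<forall>x\<in>space (PiM I M). \<forall>i\<in>I. \<forall>y\<in>space (M i). \<bar>f x - f (x(i := y))\<bar> \<le> c i)"

lemma (in prob_space) Hoeffdings_lemma_nn_integral_oscillation:
  assumes g[measurable]: "g \<in> borel_measurable M"
    and bounded: "\<And>y. y \<in> space M \<Longrightarrow> \<bar>g y\<bar> \<le> K"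
    and oscillation: "\<And>y y'. y \<in> space M \<Longrightarrow> y' \<in> space M \<Longrightarrow> g y - g y' \<le> c"
    and "l > 0"
  shows "(\<integral>\<^sup>+y. ennreal (exp (l * (g y - expectation g))) \<partial>M) \<le> ennreal (exp (l\<^sup>2 * c\<^sup>2 / 8))"
proof -
  define a where "a = (INF y\<in>space M. g y)"
  have "bdd_below (g ` space M)"
    by (rule bdd_belowI[of _ "-K"]) (use bounded in force)
  then have lower: "a \<le> g y" if "y \<in> space M" for y
    unfolding a_def using that by (simp add: cINF_lower)
  have upper: "g y \<le> a + c" if "y \<in> space M" for y
  proof -
    have "g y - c \<le> a"
      unfolding a_def by (rule cINF_greatest[OF not_empty]) (use oscillation that in force)
    then show ?thesis by simp
  qed
  interpret interval_bounded_random_variable M g a "a + c"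
    by unfold_locales (use lower upper in \<open>auto intro!: AE_I2\<close>)
  show ?thesis
    using Hoeffdings_lemma_nn_integral[OF \<open>l > 0\<close>] by simp
qed

context product_prob_space
begin

lemma bounded_differences_integral_component:
  assumes i: "i \<notin> J" and f[measurable]: "f \<in> borel_measurable (PiM (insert i J) M)"
    and bounded: "\<And>x. x \<in> space (PiM (insert i J) M) \<Longrightarrow> \<bar>f x\<bar> \<le> K"
    and diff: "bounded_differences M (insert i J) f c"
  defines "h \<equiv> \<lambda>x. \<integral>y. f (x(i := y)) \<partial>M i"
  shows "h \<in> borel_measurable (PiM J M)"
    and "\<And>x. x \<in> space (PiM J M) \<Longrightarrow> \<bar>h x\<bar> \<le> K"
    and "bounded_differences M J h c"
proof -
  have upd: "x(i := y) \<in> space (PiM (insert i J) M)" if "x \<in> space (PiM J M)" "y \<in> space (M i)" for x y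
    using that by (simp add: space_PiM PiE_fun_upd)
  have int: "integrable (M i) (\<lambda>y. f (x(i := y)))" if x: "x \<in> space (PiM J M)" for x
  proof (rule M.integrable_const_bound[where B = K])
    show "(\<lambda>y. f (x(i := y))) \<in> borel_measurable (M i)"
      using measurable_comp[OF measurable_component_update[OF x i] f] by (simp add: comp_def)
  qed (use bounded upd x in \<open>auto intro!: AE_I2\<close>)
  have "(\<lambda>(x, y). f (x(i := y))) \<in> borel_measurable (PiM J M \<Otimes>\<^sub>M M i)"
    by measurable
  then show "h \<in> borel_measurable (PiM J M)"
    unfolding h_def using M.borel_measurable_lebesgue_integral by simp
  have f_bounds: "- K \<le> f (x(i := y)) \<and> f (x(i := y)) \<le> K"
    if "x \<in> space (PiM J M)" "y \<in> space (M i)" for x y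
    using bounded[OF upd[OF that]] by (auto simp: abs_le_iff)
  show "\<bar>h x\<bar> \<le> K" if x: "x \<in> space (PiM J M)" for x
  proof -
    have "h x \<le> K" unfolding h_def
      by (rule M.integral_le_const[OF int[OF x]]) (use f_bounds x in \<open>auto intro!: AE_I2\<close>)
    moreover have "- K \<le> h x" unfolding h_def
      by (rule M.integral_ge_const[OF int[OF x]]) (use f_bounds x in \<open>auto intro!: AE_I2\<close>)
    ultimately show ?thesis by auto
  qed
  show "bounded_differences M J h c"
    unfolding bounded_differences_def
  proof (intro ballI)
    fix x j z assume x: "x \<in> space (PiM J M)" and j: "j \<in> J" and z: "z \<in> space (M j)"
    have xz: "x(j := z) \<in> space (PiM J M)"
      using x z j PiE_fun_upd[of z "\<lambda>i. space (M i)" j x J] by (simp add: space_PiM insert_absorb)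
    have "i \<noteq> j" using i j by auto
    then have swap: "x(j := z, i := y) = x(i := y, j := z)" for y by (rule fun_upd_twist[symmetric])
    have d: "- c j \<le> f (x(i := y)) - f (x(j := z, i := y)) \<and> f (x(i := y)) - f (x(j := z, i := y)) \<le> c j"
      if y: "y \<in> space (M i)" for y
      using diff upd[OF x y] j z unfolding bounded_differences_def swap by (force simp: abs_le_iff)
    have int_diff: "integrable (M i) (\<lambda>y. f (x(i := y)) - f (x(j := z, i := y)))"
      using int[OF x] int[OF xz] by auto
    have eq: "h x - h (x(j := z)) = (\<integral>y. f (x(i := y)) - f (x(j := z, i := y)) \<partial>M i)"
      unfolding h_def by (rule Bochner_Integration.integral_diff[symmetric]) (use int x xz in auto)
    have "(\<integral>y. f (x(i := y)) - f (x(j := z, i := y)) \<partial>M i) \<le> c j"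
      by (rule M.integral_le_const[OF int_diff]) (use d in \<open>auto intro!: AE_I2\<close>)
    moreover have "- c j \<le> (\<integral>y. f (x(i := y)) - f (x(j := z, i := y)) \<partial>M i)"
      by (rule M.integral_ge_const[OF int_diff]) (use d in \<open>auto intro!: AE_I2\<close>)
    ultimately show "\<bar>h x - h (x(j := z))\<bar> \<le> c j" unfolding eq by auto
  qed
qed

lemma nn_integral_exp_component_le:
  assumes i: "i \<notin> J" and f[measurable]: "f \<in> borel_measurable (PiM (insert i J) M)"
    and bounded: "\<And>x. x \<in> space (PiM (insert i J) M) \<Longrightarrow> \<bar>f x\<bar> \<le> K"
    and diff: "bounded_differences M (insert i J) f c"
    and l: "l > 0" and x: "x \<in> space (PiM J M)"
  shows "(\<integral>\<^sup>+y. ennreal (exp (l * (f (x(i := y)) - m))) \<partial>M i)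
    \<le> ennreal (exp (l * ((\<integral>y. f (x(i := y)) \<partial>M i) - m))) * ennreal (exp (l\<^sup>2 * (c i)\<^sup>2 / 8))"
proof -
  define h where "h = (\<integral>y. f (x(i := y)) \<partial>M i)"
  have upd: "x(i := y) \<in> space (PiM (insert i J) M)" if "y \<in> space (M i)" for y
    using x that by (simp add: space_PiM PiE_fun_upd)
  have fy[measurable]: "(\<lambda>y. f (x(i := y))) \<in> borel_measurable (M i)"
    using measurable_comp[OF measurable_component_update[OF x i] f] by (simp add: comp_def)
  have "(\<integral>\<^sup>+y. ennreal (exp (l * (f (x(i := y)) - m))) \<partial>M i)
      = (\<integral>\<^sup>+y. ennreal (exp (l * (h - m))) * ennreal (exp (l * (f (x(i := y)) - h))) \<partial>M i)"
    by (intro nn_integral_cong) (simp add: ennreal_mult'[symmetric] exp_add[symmetric] algebra_simps)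
  also have "\<dots> = ennreal (exp (l * (h - m))) * (\<integral>\<^sup>+y. ennreal (exp (l * (f (x(i := y)) - h))) \<partial>M i)"
    by (rule nn_integral_cmult) measurable
  also have "(\<integral>\<^sup>+y. ennreal (exp (l * (f (x(i := y)) - h))) \<partial>M i) \<le> ennreal (exp (l\<^sup>2 * (c i)\<^sup>2 / 8))"
    unfolding h_def
  proof (rule M.Hoeffdings_lemma_nn_integral_oscillation[OF fy _ _ l])
    show "\<bar>f (x(i := y))\<bar> \<le> K" if "y \<in> space (M i)" for y
      using bounded upd that by blast
    show "f (x(i := y)) - f (x(i := y')) \<le> c i" if "y \<in> space (M i)" "y' \<in> space (M i)" for y y'
      using diff upd[OF that(2)] that(1) unfolding bounded_differences_def by (force simp: abs_le_iff)
  qed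
  finally show ?thesis unfolding h_def by (simp add: mult_left_mono)
qed

lemma mcdiarmid_mgf:
  assumes "finite I"
    and "f \<in> borel_measurable (PiM I M)"
    and "\<And>x. x \<in> space (PiM I M) \<Longrightarrow> \<bar>f x\<bar> \<le> K"
    and "bounded_differences M I f c"
    and l: "l > 0"
  shows "(\<integral>\<^sup>+x. ennreal (exp (l * (f x - (\<integral>x. f x \<partial>PiM I M)))) \<partial>PiM I M)
           \<le> ennreal (exp (l\<^sup>2 * (\<Sum>i\<in>I. (c i)\<^sup>2) / 8))"
  using assms(1-4)
proof (induction I arbitrary: f rule: finite_induct)
  case empty
  have "PiM {} M = count_space {\<lambda>_. undefined}" by (rule PiM_empty)
  then show ?case
    by (simp add: nn_integral_count_space_finite lebesgue_integral_count_space_finite)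
next
  case (insert i J)
  let ?P = "PiM J M"
  note f[measurable] = insert.prems(1)
  define h where "h x = (\<integral>y. f (x(i := y)) \<partial>M i)" for x
  note h = bounded_differences_integral_component[OF insert.hyps(2) insert.prems, folded h_def]
  note h_meas[measurable] = h(1)
  interpret PIJ: prob_space "PiM (insert i J) M" by (intro prob_space_PiM prob_space)
  have f_int: "integrable (PiM (insert i J) M) f"
    by (rule PIJ.integrable_const_bound[where B = K]) (use insert.prems(2) in \<open>auto intro!: AE_I2\<close>)
  define m where "m = (\<integral>x. f x \<partial>PiM (insert i J) M)"
  have m: "m = (\<integral>x. h x \<partial>?P)"
    unfolding m_def h_def by (rule product_integral_insert[OF insert.hyps(1,2) f_int])
  note inner = nn_integral_exp_component_le[OF insert.hyps(2) insert.prems l, of _ m, folded h_def]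
  have "(\<integral>\<^sup>+x. ennreal (exp (l * (f x - m))) \<partial>PiM (insert i J) M)
      = (\<integral>\<^sup>+x. (\<integral>\<^sup>+y. ennreal (exp (l * (f (x(i := y)) - m))) \<partial>M i) \<partial>?P)"
    by (rule product_nn_integral_insert[OF insert.hyps(1,2)]) measurable
  also have "\<dots> \<le> (\<integral>\<^sup>+x. ennreal (exp (l * (h x - m))) * ennreal (exp (l\<^sup>2 * (c i)\<^sup>2 / 8)) \<partial>?P)"
    by (rule nn_integral_mono) (rule inner)
  also have "\<dots> = (\<integral>\<^sup>+x. ennreal (exp (l * (h x - m))) \<partial>?P) * ennreal (exp (l\<^sup>2 * (c i)\<^sup>2 / 8))"
    by (rule nn_integral_multc) measurable
  also have "\<dots> \<le> ennreal (exp (l\<^sup>2 * (\<Sum>i\<in>J. (c i)\<^sup>2) / 8)) * ennreal (exp (l\<^sup>2 * (c i)\<^sup>2 / 8))"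
    unfolding m by (intro mult_right_mono insert.IH[OF h] zero_le)
  also have "\<dots> = ennreal (exp (l\<^sup>2 * (\<Sum>i\<in>insert i J. (c i)\<^sup>2) / 8))"
    using insert.hyps by (simp add: ennreal_mult'[symmetric] exp_add[symmetric] add_divide_distrib algebra_simps)
  finally show ?case unfolding m_def .
qed

lemma mcdiarmid_lower_tail:
  assumes fin: "finite I"
    and f[measurable]: "f \<in> borel_measurable (PiM I M)"
    and bounded: "\<And>x. x \<in> space (PiM I M) \<Longrightarrow> \<bar>f x\<bar> \<le> K"
    and diff: "bounded_differences M I f c"
    and t: "t > 0" and C: "(\<Sum>i\<in>I. (c i)\<^sup>2) > 0"
  shows "measure (PiM I M) {x \<in> space (PiM I M). f x \<le> (\<integral>x. f x \<partial>PiM I M) - t}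
           \<le> exp (- 2 * t\<^sup>2 / (\<Sum>i\<in>I. (c i)\<^sup>2))"
proof -
  let ?P = "PiM I M"
  interpret prob_space ?P by (intro prob_space_PiM prob_space)
  define C where "C = (\<Sum>i\<in>I. (c i)\<^sup>2)"
  define l where "l = 4 * t / C"
  have l: "l > 0" using t C unfolding l_def C_def by simp
  define g where "g x = - f x" for x
  have g[measurable]: "g \<in> borel_measurable ?P" unfolding g_def by measurable
  have "bounded_differences M I g c"
    using diff unfolding bounded_differences_def g_def by (simp add: abs_minus_commute)
  then have mgf: "(\<integral>\<^sup>+x. ennreal (exp (l * (g x - (\<integral>x. g x \<partial>?P)))) \<partial>?P) \<le> ennreal (exp (l\<^sup>2 * C / 8))"
    unfolding C_def using bounded by (intro mcdiarmid_mgf[OF fin g _ _ l]) (auto simp: g_def)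
  have tail: "{x \<in> space ?P. f x \<le> (\<integral>x. f x \<partial>?P) - t} = {x \<in> space ?P. t \<le> g x - (\<integral>x. g x \<partial>?P)}"
    unfolding g_def by auto
  have "emeasure ?P {x \<in> space ?P. t \<le> g x - (\<integral>x. g x \<partial>?P)}
      \<le> ennreal (exp (- l * t)) * (\<integral>\<^sup>+x. ennreal (exp (l * (g x - (\<integral>x. g x \<partial>?P)))) * indicator (space ?P) x \<partial>?P)"
    by (rule Chernoff_ineq_nn_integral_ge[OF l]) (simp_all, measurable)
  also have "(\<integral>\<^sup>+x. ennreal (exp (l * (g x - (\<integral>x. g x \<partial>?P)))) * indicator (space ?P) x \<partial>?P)
      = (\<integral>\<^sup>+x. ennreal (exp (l * (g x - (\<integral>x. g x \<partial>?P)))) \<partial>?P)"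
    by (rule nn_integral_cong) simp
  also have "ennreal (exp (- l * t)) * \<dots> \<le> ennreal (exp (- l * t)) * ennreal (exp (l\<^sup>2 * C / 8))"
    by (rule mult_left_mono[OF mgf]) simp
  also have "\<dots> = ennreal (exp (- 2 * t\<^sup>2 / C))"
  proof -
    have "- l * t + l\<^sup>2 * C / 8 = - 2 * t\<^sup>2 / C"
      using C unfolding l_def C_def by (simp add: field_simps power2_eq_square)
    then show ?thesis by (simp add: ennreal_mult'[symmetric] exp_add[symmetric])
  qed
  finally show ?thesis
    unfolding tail C_def by (simp add: emeasure_eq_measure)
qed

end

section \<open>The primal-dual analysis\<close>

lemma is_matching_inj_on_fst: "is_matching M \<Longrightarrow> inj_on fst M"
  unfolding is_matching_def by (rule inj_onI) fastforce

lemma is_matching_inj_on_snd: "is_matching M \<Longrightarrow> inj_on snd M"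
  unfolding is_matching_def by (rule inj_onI) fastforce

lemma sum_collect_by_vertex:
  assumes "finite V" and "\<And>e. e \<in> F \<Longrightarrow> v e \<in> V"
  shows "(\<Sum>u\<in>V. \<Sum>e\<in>F. if P e \<and> v e = u then g e else 0) = (\<Sum>e\<in>F. if P e then g e else 0)"
proof -
  have "(\<Sum>u\<in>V. \<Sum>e\<in>F. if P e \<and> v e = u then g e else 0)
      = (\<Sum>e\<in>F. \<Sum>u\<in>V. if v e = u then (if P e then g e else 0) else 0)"
    by (subst sum.swap) (intro sum.cong refl, auto)
  also have "\<dots> = (\<Sum>e\<in>F. if P e then g e else 0)"
    using assms by (intro sum.cong refl) (simp add: sum.delta)
  finally show ?thesis .
qed

definition clamp01 :: "real \<Rightarrow> real" where
  "clamp01 r = max 0 (min 1 r)"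

text \<open>A buyer matched to a seller of rank \<open>y\<close> gives \<open>exp (y - 1)\<close> of the gain to the seller and
  keeps \<open>1 - exp (y - 1)\<close>. Ranks are clamped to \<open>[0, 1]\<close>, which they leave only with
  probability zero.\<close>
definition price :: "real \<Rightarrow> real" where
  "price r = exp (clamp01 r - 1)"

lemma clamp01_mono: "a \<le> b \<Longrightarrow> clamp01 a \<le> clamp01 b"
  unfolding clamp01_def by auto

lemma clamp01_bounds: "0 \<le> clamp01 r" "clamp01 r \<le> 1"
  unfolding clamp01_def by auto

lemma price_bounds: "0 < price r" "price r \<le> 1"
  unfolding price_def using clamp01_bounds(2)[of r] by simp_all

lemma price_mono: "a \<le> b \<Longrightarrow> price a \<le> price b"
  unfolding price_def using clamp01_mono by simp

lemma price_measurable[measurable]: "price \<in> borel_measurable borel"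
  unfolding price_def clamp01_def by measurable

lemma nn_integral_threshold_gain:
  assumes c: "0 \<le> c" "c \<le> 1"
  shows "(\<integral>\<^sup>+y. ennreal ((1 - exp (c - 1)) + indicator {0..c} y * exp (y - 1)) \<partial>uniform01)
    = ennreal (1 - exp (-1))"
proof -
  have nonneg: "0 \<le> 1 - exp (c - 1)" using c by simp
  have "(\<integral>\<^sup>+y. ennreal ((1 - exp (c - 1)) + indicator {0..c} y * exp (y - 1)) \<partial>uniform01)
      = (\<integral>\<^sup>+y. ennreal (1 - exp (c - 1)) * indicator {0..1} y + ennreal (exp (y - 1)) * indicator {0..c} y \<partial>lborel)"
    using c nonneg
    by (subst nn_integral_uniform_measure)
      (auto intro!: nn_integral_cong simp: measurable_lborel1 divide_ennreal_def ennreal_plus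
        split: split_indicator)
  also have "\<dots> = (\<integral>\<^sup>+y. ennreal (1 - exp (c - 1)) * indicator {0..1::real} y \<partial>lborel)
      + (\<integral>\<^sup>+y. ennreal (exp (y - 1)) * indicator {0..c} y \<partial>lborel)"
  proof (rule nn_integral_add)
    show "(\<lambda>y. ennreal (1 - exp (c - 1)) * indicator {0..1::real} y) \<in> borel_measurable lborel"
      unfolding measurable_lborel1 by measurable
    show "(\<lambda>y. ennreal (exp (y - 1)) * indicator {0..c} y) \<in> borel_measurable lborel"
      unfolding measurable_lborel1 by measurable
  qed
  also have "(\<integral>\<^sup>+y. ennreal (1 - exp (c - 1)) * indicator {0..1::real} y \<partial>lborel) = ennreal (1 - exp (c - 1))"
    by (subst nn_integral_cmult_indicator) auto
  also have "(\<integral>\<^sup>+y. ennreal (exp (y - 1)) * indicator {0..c} y \<partial>lborel) = ennreal (exp (c - 1) - exp (0 - 1))"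
    using c by (intro nn_integral_FTC_Icc) (auto intro!: derivative_eq_intros)
  also have "ennreal (1 - exp (c - 1)) + ennreal (exp (c - 1) - exp (0 - 1)) = ennreal (1 - exp (-1))"
    using nonneg c by (subst ennreal_plus[symmetric]) auto
  finally show ?thesis .
qed

lemma exp_tail_less:
  fixes n \<alpha> t :: real
  assumes "0 < n" "0 < \<alpha>" "\<alpha> * n < t"
  shows "exp (- 2 * t\<^sup>2 / n) < exp (- 2 * \<alpha>\<^sup>2 * n)"
proof -
  have "(\<alpha> * n)\<^sup>2 < t\<^sup>2"
    using assms by (intro power_strict_mono) auto
  then have "\<alpha>\<^sup>2 * n * n < t\<^sup>2"
    by (simp add: power2_eq_square ac_simps)
  then have "\<alpha>\<^sup>2 * n < t\<^sup>2 / n"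
    using assms(1) by (simp add: pos_less_divide_eq)
  then show ?thesis by simp
qed

locale ranking_instance =
  fixes S :: "'s set" and E :: "('b \<times> 's) set" and Mstar :: "('b \<times> 's) set" and bs :: "'b list"
  assumes finite_S: "finite S" and finite_E: "finite E" and sellers_E: "snd ` E \<subseteq> S"
    and Mstar_subset: "Mstar \<subseteq> E" and matching_Mstar: "is_matching Mstar"
    and buyers_Mstar: "fst ` Mstar \<subseteq> set bs"
begin

definition Estar :: "('b \<times> 's) set" where
  "Estar = E \<inter> fst ` Mstar \<times> snd ` Mstar"

lemma finite_Estar: "finite Estar"
  using finite_E by (simp add: Estar_def)

lemma finite_Mstar: "finite Mstar"
  using finite_E Mstar_subset by (rule finite_subset[rotated])

lemma Mstar_subset_Estar: "Mstar \<subseteq> Estar"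
  using Mstar_subset by (force simp: Estar_def)

lemma sellers_Mstar: "snd ` Mstar \<subseteq> S"
  using Mstar_subset sellers_E by auto

lemma sellers_Estar: "snd ` Estar \<subseteq> snd ` Mstar"
  by (force simp: Estar_def)

lemma sellers_Estar_S: "snd ` Estar \<subseteq> S"
  using sellers_Estar sellers_Mstar by blast

lemma card_sellers_Mstar: "card (snd ` Mstar) = card Mstar"
  using is_matching_inj_on_snd[OF matching_Mstar] by (rule card_image)

lemma inj_on_sellers_Estar: "inj_on x S \<Longrightarrow> inj_on x (snd ` Estar)"
  by (rule inj_on_subset[OF _ sellers_Estar_S])

lemma card_ranking_Estar_le:
  assumes "inj_on x S"
  shows "card (ranking Estar x bs) \<le> card (ranking E x bs)"
proof -
  have inj: "inj_on x (snd ` E)" using assms sellers_E by (rule inj_on_subset)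
  have "Estar = restrict_buyers (delete_sellers E (- snd ` Mstar)) (fst ` Mstar)"
    by (force simp: Estar_def restrict_buyers_def delete_sellers_def)
  also have "card (ranking \<dots> x bs) \<le> card (ranking (delete_sellers E (- snd ` Mstar)) x bs)"
  proof (rule card_ranking_restrict_buyers_le[OF finite_delete_sellers[OF finite_E]])
    show "inj_on x (snd ` delete_sellers E (- snd ` Mstar))"
      by (rule inj_on_subset[OF inj]) (auto simp: delete_sellers_def)
  qed
  also have "\<dots> \<le> card (ranking E x bs)"
    by (rule card_ranking_delete_sellers_le[OF finite_E inj])
  finally show ?thesis .
qed

definition dual_buyer :: "'b \<Rightarrow> ('s \<Rightarrow> real) \<Rightarrow> real" where
  "dual_buyer i x = (\<Sum>e\<in>Estar. if e \<in> ranking Estar x bs \<and> fst e = i then 1 - price (x (snd e)) else 0)"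

definition dual_seller :: "'s \<Rightarrow> ('s \<Rightarrow> real) \<Rightarrow> real" where
  "dual_seller j x = (\<Sum>e\<in>Estar. if e \<in> ranking Estar x bs \<and> snd e = j then price (x (snd e)) else 0)"

lemma dual_buyer_nonneg: "0 \<le> dual_buyer i x"
  unfolding dual_buyer_def by (rule sum_nonneg) (simp add: price_bounds)

lemma dual_seller_nonneg: "0 \<le> dual_seller j x"
  unfolding dual_seller_def by (rule sum_nonneg) (simp add: price_bounds less_imp_le)

lemma dual_buyer_ge:
  assumes "(i, s) \<in> ranking Estar x bs"
  shows "1 - price (x s) \<le> dual_buyer i x"
proof -
  have "(i, s) \<in> Estar" using assms ranking_subset[OF finite_Estar] by blast
  then have "(if (i, s) \<in> ranking Estar x bs \<and> fst (i, s) = i then 1 - price (x (snd (i, s))) else 0)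
      \<le> dual_buyer i x"
    unfolding dual_buyer_def by (rule member_le_sum[OF _ _ finite_Estar]) (simp add: price_bounds)
  then show ?thesis using assms by simp
qed

lemma dual_seller_ge:
  assumes "(i, j) \<in> ranking Estar x bs"
  shows "price (x j) \<le> dual_seller j x"
proof -
  have "(i, j) \<in> Estar" using assms ranking_subset[OF finite_Estar] by blast
  then have "(if (i, j) \<in> ranking Estar x bs \<and> snd (i, j) = j then price (x (snd (i, j))) else 0)
      \<le> dual_seller j x"
    unfolding dual_seller_def
    by (rule member_le_sum[OF _ _ finite_Estar]) (simp add: price_bounds less_imp_le)
  then show ?thesis using assms by simp
qed

lemma sum_duals_eq_card_ranking:
  "(\<Sum>p\<in>Mstar. dual_buyer (fst p) x + dual_seller (snd p) x) = real (card (ranking Estar x bs))"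
proof -
  let ?R = "ranking Estar x bs"
  have vertices: "fst e \<in> fst ` Mstar" "snd e \<in> snd ` Mstar" if "e \<in> Estar" for e
    using that unfolding Estar_def by (simp_all add: mem_Times_iff)
  have "(\<Sum>p\<in>Mstar. dual_buyer (fst p) x) = (\<Sum>i\<in>fst ` Mstar. dual_buyer i x)"
    using sum.reindex[OF is_matching_inj_on_fst[OF matching_Mstar], of "\<lambda>i. dual_buyer i x"]
    by (simp add: comp_def)
  also have "\<dots> = (\<Sum>e\<in>Estar. if e \<in> ?R then 1 - price (x (snd e)) else 0)"
    unfolding dual_buyer_def
    by (rule sum_collect_by_vertex[of "fst ` Mstar" Estar fst "\<lambda>e. e \<in> ?R"])
      (simp_all add: finite_Mstar vertices)
  finally have buyers: "(\<Sum>p\<in>Mstar. dual_buyer (fst p) x) = \<dots>" .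
  have "(\<Sum>p\<in>Mstar. dual_seller (snd p) x) = (\<Sum>j\<in>snd ` Mstar. dual_seller j x)"
    using sum.reindex[OF is_matching_inj_on_snd[OF matching_Mstar], of "\<lambda>j. dual_seller j x"]
    by (simp add: comp_def)
  also have "\<dots> = (\<Sum>e\<in>Estar. if e \<in> ?R then price (x (snd e)) else 0)"
    unfolding dual_seller_def
    by (rule sum_collect_by_vertex[of "snd ` Mstar" Estar snd "\<lambda>e. e \<in> ?R"])
      (simp_all add: finite_Mstar vertices)
  finally have sellers: "(\<Sum>p\<in>Mstar. dual_seller (snd p) x) = \<dots>" .
  have "(\<Sum>p\<in>Mstar. dual_buyer (fst p) x + dual_seller (snd p) x)
      = (\<Sum>e\<in>Estar. (if e \<in> ?R then 1 - price (x (snd e)) else 0) + (if e \<in> ?R then price (x (snd e)) else 0))"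
    by (simp only: sum.distrib buyers sellers)
  also have "\<dots> = (\<Sum>e\<in>Estar. if e \<in> ?R then 1 else 0)"
    by (rule sum.cong) simp_all
  also have "\<dots> = real (card (Estar \<inter> ?R))"
    using finite_Estar by (simp add: sum.If_cases)
  also have "Estar \<inter> ?R = ?R"
    using ranking_subset[OF finite_Estar, of x bs] by blast
  finally show ?thesis .
qed

lemma dual_buyer_measurable[measurable]: "dual_buyer i \<in> borel_measurable (rank_space S)"
proof -
  note rank_measurable[measurable] measurable_mem_ranking[OF finite_S sellers_Estar_S, measurable]
  have "(\<lambda>x. dual_buyer i x) \<in> borel_measurable (rank_space S)"
    unfolding dual_buyer_def by measurable
  then show ?thesis by simp
qed

lemma dual_seller_measurable[measurable]: "dual_seller j \<in> borel_measurable (rank_space S)"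
proof -
  note rank_measurable[measurable] measurable_mem_ranking[OF finite_S sellers_Estar_S, measurable]
  have "(\<lambda>x. dual_seller j x) \<in> borel_measurable (rank_space S)"
    unfolding dual_seller_def by measurable
  then show ?thesis by simp
qed

text \<open>The critical rank for the edge \<open>(i, j)\<close>: the rank of the partner of \<open>i\<close> when seller \<open>j\<close>
  is removed (\<open>1\<close> if there is none). Seller \<open>j\<close> is matched whenever its rank is below it.\<close>
definition threshold :: "'b \<Rightarrow> 's \<Rightarrow> ('s \<Rightarrow> real) \<Rightarrow> real" where
  "threshold i j x =
     Min (insert 1 ((\<lambda>s. clamp01 (x s)) ` {s. (i, s) \<in> ranking (delete_sellers Estar {j}) x bs}))"

lemma finite_partners: "finite {s. (i, s) \<in> ranking (delete_sellers Estar {j}) x bs}"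
proof (rule finite_subset)
  show "{s. (i, s) \<in> ranking (delete_sellers Estar {j}) x bs} \<subseteq> snd ` delete_sellers Estar {j}"
    using ranking_subset[OF finite_delete_sellers[OF finite_Estar]] by force
qed (simp add: finite_delete_sellers finite_Estar)

lemma threshold_bounds: "0 \<le> threshold i j x" "threshold i j x \<le> 1"
  unfolding threshold_def using finite_partners by (simp_all add: clamp01_bounds)

lemma threshold_le:
  "(i, s) \<in> ranking (delete_sellers Estar {j}) x bs \<Longrightarrow> threshold i j x \<le> clamp01 (x s)"
  unfolding threshold_def using finite_partners by (intro Min_le) auto

lemma threshold_attained:
  assumes "threshold i j x \<noteq> 1"
  obtains s where "(i, s) \<in> ranking (delete_sellers Estar {j}) x bs" "threshold i j x = clamp01 (x s)"
proof -
  have "threshold i j x \<in> insert 1 ((\<lambda>s. clamp01 (x s)) ` {s. (i, s) \<in> ranking (delete_sellers Estar {j}) x bs})"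
    unfolding threshold_def using finite_partners by (intro Min_in) auto
  then show ?thesis using assms that by auto
qed

lemma threshold_fun_upd: "threshold i j (x(j := y)) = threshold i j x"
proof -
  have sellers: "s \<noteq> j" if "s \<in> snd ` delete_sellers Estar {j}" for s
    using that by (auto simp: delete_sellers_def)
  have "ranking (delete_sellers Estar {j}) (x(j := y)) bs = ranking (delete_sellers Estar {j}) x bs"
    by (rule ranking_cong_order) (simp add: sellers)
  moreover have "s \<noteq> j" if "(i, s) \<in> ranking (delete_sellers Estar {j}) x bs" for s
    using that ranking_subset[OF finite_delete_sellers[OF finite_Estar]] sellers by force
  ultimately show ?thesis
    unfolding threshold_def by (intro arg_cong[where f = Min] arg_cong[where f = "insert 1"] image_cong) auto
qed

lemma dual_buyer_ge_threshold:
  assumes inj: "inj_on x S"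
  shows "1 - exp (threshold i j x - 1) \<le> dual_buyer i x"
proof (cases "threshold i j x = 1")
  case True
  then show ?thesis using dual_buyer_nonneg by simp
next
  case False
  then obtain s' where s': "(i, s') \<in> ranking (delete_sellers Estar {j}) x bs"
    and threshold: "threshold i j x = clamp01 (x s')"
    by (rule threshold_attained)
  obtain s where s: "(i, s) \<in> ranking Estar x bs" and "x s \<le> x s'"
    using ranking_delete_sellers_partner[OF finite_Estar inj_on_sellers_Estar[OF inj] s'] by blast
  have "price (x s) \<le> price (x s')" by (rule price_mono) fact
  moreover have "exp (threshold i j x - 1) = price (x s')" by (simp add: threshold price_def)
  ultimately show ?thesis using dual_buyer_ge[OF s] by simp
qed

lemma dual_seller_ge_below_threshold:
  assumes inj: "inj_on x S" and ij: "(i, j) \<in> Mstar"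
    and nonneg: "0 \<le> x j" and below: "x j < threshold i j x"
  shows "exp (x j - 1) \<le> dual_seller j x"
proof -
  have "j \<in> snd ` ranking Estar x bs"
  proof (rule ccontr)
    assume unmatched: "j \<notin> snd ` ranking Estar x bs"
    have "(i, j) \<in> Estar" "i \<in> set bs" using ij Mstar_subset_Estar buyers_Mstar by force+
    then obtain s where s: "(i, s) \<in> ranking Estar x bs" and "x s \<le> x j"
      using ranking_unmatched_nbr[OF finite_Estar _ _ unmatched] by blast
    have "(i, s) \<in> ranking (delete_sellers Estar {j}) x bs"
      using s ranking_delete_unmatched_seller[OF finite_Estar inj_on_sellers_Estar[OF inj] unmatched]
      by simp
    then have "threshold i j x \<le> clamp01 (x s)" by (rule threshold_le)
    also have "\<dots> \<le> clamp01 (x j)" using \<open>x s \<le> x j\<close> by (rule clamp01_mono)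
    also have "\<dots> \<le> x j" using nonneg by (simp add: clamp01_def)
    finally show False using below by simp
  qed
  then obtain b where "(b, j) \<in> ranking Estar x bs" by force
  then have "price (x j) \<le> dual_seller j x" by (rule dual_seller_ge)
  moreover have "price (x j) = exp (x j - 1)"
    using nonneg below threshold_bounds(2)[of i j x] by (simp add: price_def clamp01_def)
  ultimately show ?thesis by simp
qed

lemma duals_ge_threshold_gain:
  assumes ij: "(i, j) \<in> Mstar" and inj: "inj_on x S"
    and y: "x j \<in> {0..1}" "x j \<noteq> threshold i j x"
  shows "(1 - exp (threshold i j x - 1)) + indicator {0..threshold i j x} (x j) * exp (x j - 1)
    \<le> dual_buyer i x + dual_seller j x"
proof -
  have "indicator {0..threshold i j x} (x j) * exp (x j - 1) \<le> dual_seller j x"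
  proof (cases "x j \<le> threshold i j x")
    case True
    then show ?thesis
      using dual_seller_ge_below_threshold[OF inj ij] y by simp
  qed (simp add: dual_seller_nonneg)
  then show ?thesis using dual_buyer_ge_threshold[OF inj, of i j] by simp
qed

text \<open>The threshold does not depend on the rank of \<open>j\<close>, so integrating over this rank
  alone already yields \<open>1 - 1/e\<close>.\<close>
lemma expected_duals_fun_upd:
  assumes ij: "(i, j) \<in> Mstar" and inj: "inj_on x (S - {j})"
  shows "ennreal (1 - exp (-1))
    \<le> (\<integral>\<^sup>+y. ennreal (dual_buyer i (x(j := y)) + dual_seller j (x(j := y))) \<partial>uniform01)"
proof -
  define c where "c = threshold i j x"
  have c: "0 \<le> c" "c \<le> 1" unfolding c_def by (rule threshold_bounds)+
  have j: "j \<in> S" using ij sellers_Mstar by force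
  have "AE y in lborel. y \<notin> insert c (x ` (S - {j}))"
    using finite_S by (intro AE_not_in countable_imp_null_set_lborel countable_finite) simp
  then have "AE y in lborel. y \<in> {0..1} \<longrightarrow> (1 - exp (c - 1)) + indicator {0..c} y * exp (y - 1)
      \<le> dual_buyer i (x(j := y)) + dual_seller j (x(j := y))"
  proof eventually_elim
    case (elim y)
    have "inj_on (x(j := y)) S"
      using inj elim j by (subst insert_Diff[OF j, symmetric]) (auto simp: inj_on_def)
    then show ?case
      using duals_ge_threshold_gain[OF ij, of "x(j := y)"] elim threshold_fun_upd[of i j x y]
      by (simp add: c_def)
  qed
  then have "AE y in uniform01. (1 - exp (c - 1)) + indicator {0..c} y * exp (y - 1)
      \<le> dual_buyer i (x(j := y)) + dual_seller j (x(j := y))"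
    by (subst AE_uniform_measure) auto
  then have "(\<integral>\<^sup>+y. ennreal ((1 - exp (c - 1)) + indicator {0..c} y * exp (y - 1)) \<partial>uniform01)
      \<le> (\<integral>\<^sup>+y. ennreal (dual_buyer i (x(j := y)) + dual_seller j (x(j := y))) \<partial>uniform01)"
    by (intro nn_integral_mono_AE) (auto elim!: eventually_mono intro: ennreal_leI)
  then show ?thesis using nn_integral_threshold_gain[OF c] by simp
qed

lemma expected_duals:
  assumes ij: "(i, j) \<in> Mstar"
  shows "ennreal (1 - exp (-1)) \<le> (\<integral>\<^sup>+x. ennreal (dual_buyer i x + dual_seller j x) \<partial>rank_space S)"
proof -
  interpret PS: product_prob_space "\<lambda>_. uniform01" S by (rule product_prob_space_uniform01)
  interpret PJ: prob_space "PiM (S - {j}) (\<lambda>_. uniform01)" by (intro prob_space_PiM prob_space_uniform01)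
  have j: "j \<in> S" using ij sellers_Mstar by force
  have S: "rank_space S = PiM (insert j (S - {j})) (\<lambda>_. uniform01)"
    using j by (simp add: rank_space_def insert_absorb)
  have "(\<lambda>x. ennreal (dual_buyer i x + dual_seller j x)) \<in> borel_measurable (PiM (insert j (S - {j})) (\<lambda>_. uniform01))"
    unfolding S[symmetric] by measurable
  then have "(\<integral>\<^sup>+x. ennreal (dual_buyer i x + dual_seller j x) \<partial>rank_space S)
      = (\<integral>\<^sup>+x. (\<integral>\<^sup>+y. ennreal (dual_buyer i (x(j := y)) + dual_seller j (x(j := y))) \<partial>uniform01)
           \<partial>PiM (S - {j}) (\<lambda>_. uniform01))"
    unfolding S using finite_S by (intro PS.product_nn_integral_insert) auto
  moreover have "ennreal (1 - exp (-1)) \<le> \<dots>"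
    using AE_rank_space_inj[of "S - {j}"] finite_S unfolding rank_space_def
    by (intro PJ.nn_integral_ge_const) (auto elim!: eventually_mono intro: expected_duals_fun_upd[OF ij])
  ultimately show ?thesis by simp
qed

lemma expected_card_ranking_Estar:
  "ennreal ((1 - exp (-1)) * real (card Mstar))
     \<le> (\<integral>\<^sup>+x. ennreal (real (card (ranking Estar x bs))) \<partial>rank_space S)"
proof -
  have "ennreal ((1 - exp (-1)) * real (card Mstar)) = (\<Sum>p\<in>Mstar. ennreal (1 - exp (-1)))"
    by (simp add: ennreal_mult ennreal_of_nat_eq_real_of_nat mult.commute)
  also have "\<dots> \<le> (\<Sum>p\<in>Mstar. \<integral>\<^sup>+x. ennreal (dual_buyer (fst p) x + dual_seller (snd p) x) \<partial>rank_space S)"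
    by (intro sum_mono expected_duals) simp
  also have "\<dots> = (\<integral>\<^sup>+x. (\<Sum>p\<in>Mstar. ennreal (dual_buyer (fst p) x + dual_seller (snd p) x)) \<partial>rank_space S)"
    by (rule nn_integral_sum[symmetric]) measurable
  also have "\<dots> = (\<integral>\<^sup>+x. ennreal (real (card (ranking Estar x bs))) \<partial>rank_space S)"
  proof (intro nn_integral_cong)
    fix x
    show "(\<Sum>p\<in>Mstar. ennreal (dual_buyer (fst p) x + dual_seller (snd p) x))
        = ennreal (real (card (ranking Estar x bs)))"
      by (subst sum_ennreal) (simp_all add: dual_buyer_nonneg dual_seller_nonneg sum_duals_eq_card_ranking)
  qed
  finally show ?thesis .
qed

section \<open>Concentration\<close>

text \<open>Equal to \<open>card (ranking Estar x bs)\<close> almost surely, but with bounded differences at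
  every point, as McDiarmid's inequality requires.\<close>
definition tie_broken_card :: "('s \<Rightarrow> real) \<Rightarrow> real" where
  "tie_broken_card x = real (card (ranking Estar (tie_break S x) bs))"

lemma tie_broken_card_measurable[measurable]: "tie_broken_card \<in> borel_measurable (rank_space S)"
  by (rule measurable_order_invariant[OF finite_S]) (simp_all add: tie_broken_card_def tie_break_cong)

lemma tie_broken_card_bounded: "\<bar>tie_broken_card x\<bar> \<le> real (card Estar)"
  using card_mono[OF finite_Estar ranking_subset[OF finite_Estar]] by (simp add: tie_broken_card_def)

lemma tie_broken_card_eq:
  assumes "inj_on x S"
  shows "tie_broken_card x = real (card (ranking Estar x bs))"
proof -
  have "ranking Estar (tie_break S x) bs = ranking Estar x bs"
    using sellers_Estar_S tie_break_less_iff_inj[OF finite_S assms] by (intro ranking_cong_order) blast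
  then show ?thesis by (simp add: tie_broken_card_def)
qed

lemma tie_broken_card_bounded_differences:
  "bounded_differences (\<lambda>_. uniform01) S tie_broken_card (\<lambda>j. if j \<in> snd ` Mstar then 1 else 0)"
  unfolding bounded_differences_def
proof (intro ballI)
  fix x j z assume "j \<in> S"
  let ?r = "tie_break S x" and ?r' = "tie_break S (x(j := z))"
  have order: "?r s < ?r t \<longleftrightarrow> ?r' s < ?r' t" if "s \<in> snd ` Estar - {j}" "t \<in> snd ` Estar - {j}" for s t
    using that sellers_Estar_S tie_break_fun_upd_less_iff[OF finite_S] by blast
  show "\<bar>tie_broken_card x - tie_broken_card (x(j := z))\<bar> \<le> (if j \<in> snd ` Mstar then 1 else 0)"
  proof (cases "j \<in> snd ` Mstar")
    case True
    then show ?thesis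
      using card_ranking_change_one_rank[OF finite_Estar _ _ order]
        inj_on_sellers_Estar[OF inj_on_tie_break[OF finite_S]]
      by (simp add: tie_broken_card_def)
  next
    case False
    then have "snd ` Estar \<subseteq> snd ` Estar - {j}" using sellers_Estar by blast
    then have "ranking Estar ?r bs = ranking Estar ?r' bs"
      using order by (intro ranking_cong_order) blast
    then show ?thesis using False by (simp add: tie_broken_card_def)
  qed
qed

lemma expectation_tie_broken_card:
  "(1 - exp (-1)) * real (card Mstar) \<le> (\<integral>x. tie_broken_card x \<partial>rank_space S)"
proof -
  interpret prob_space "rank_space S" by (rule prob_space_rank_space)
  have int: "integrable (rank_space S) tie_broken_card"
    using tie_broken_card_bounded by (intro integrable_const_bound[where B = "real (card Estar)"]) auto
  have "ennreal ((1 - exp (-1)) * real (card Mstar))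
      \<le> (\<integral>\<^sup>+x. ennreal (real (card (ranking Estar x bs))) \<partial>rank_space S)"
    by (rule expected_card_ranking_Estar)
  also have "\<dots> = (\<integral>\<^sup>+x. ennreal (tie_broken_card x) \<partial>rank_space S)"
    using AE_rank_space_inj[OF finite_S] by (intro nn_integral_cong_AE) (auto elim!: eventually_mono simp: tie_broken_card_eq)
  also have "\<dots> = ennreal (\<integral>x. tie_broken_card x \<partial>rank_space S)"
    by (rule nn_integral_eq_integral[OF int]) (simp add: tie_broken_card_def)
  finally have "ennreal ((1 - exp (-1)) * real (card Mstar)) \<le> ennreal (\<integral>x. tie_broken_card x \<partial>rank_space S)" .
  moreover have "0 \<le> (\<integral>x. tie_broken_card x \<partial>rank_space S)"
    by (intro integral_nonneg_AE) (simp add: tie_broken_card_def)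
  ultimately show ?thesis by simp
qed

lemma tie_broken_card_lower_tail:
  assumes "Mstar \<noteq> {}" and "t > 0"
  shows "measure (rank_space S)
      {x \<in> space (rank_space S). tie_broken_card x \<le> (\<integral>x. tie_broken_card x \<partial>rank_space S) - t}
    \<le> exp (- 2 * t\<^sup>2 / real (card Mstar))"
proof -
  interpret product_prob_space "\<lambda>_. uniform01" S by (rule product_prob_space_uniform01)
  have "(\<Sum>j\<in>S. (if j \<in> snd ` Mstar then 1 else 0 :: real)\<^sup>2) = (\<Sum>j\<in>S. if j \<in> snd ` Mstar then 1 else 0)"
    by (intro sum.cong) simp_all
  also have "\<dots> = real (card (S \<inter> snd ` Mstar))"
    using finite_S by (simp add: sum.If_cases)
  also have "\<dots> = real (card Mstar)"
    using sellers_Mstar card_sellers_Mstar by (simp add: Int_absorb1)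
  finally have sum: "(\<Sum>j\<in>S. (if j \<in> snd ` Mstar then 1 else 0 :: real)\<^sup>2) = real (card Mstar)" .
  have "0 < real (card Mstar)" using assms(1) finite_Mstar by (simp add: card_gt_0_iff)
  then show ?thesis
    unfolding rank_space_def sum[symmetric]
  proof (intro mcdiarmid_lower_tail[OF finite_S] \<open>t > 0\<close>)
    show "tie_broken_card \<in> borel_measurable (PiM S (\<lambda>_. uniform01))"
      using tie_broken_card_measurable by (simp add: rank_space_def)
    show "\<bar>tie_broken_card x\<bar> \<le> real (card Estar)" for x by (rule tie_broken_card_bounded)
  qed (rule tie_broken_card_bounded_differences)
qed

lemma measure_card_ranking_less_le:
  "measure (rank_space S) {x \<in> space (rank_space S). real (card (ranking E x bs)) < c}
    \<le> measure (rank_space S) {x \<in> space (rank_space S). tie_broken_card x \<le> \<lceil>c\<rceil> - 1}"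
proof -
  interpret prob_space "rank_space S" by (rule prob_space_rank_space)
  have "AE x in rank_space S. x \<in> {x \<in> space (rank_space S). real (card (ranking E x bs)) < c}
      \<longrightarrow> x \<in> {x \<in> space (rank_space S). tie_broken_card x \<le> \<lceil>c\<rceil> - 1}"
    using AE_rank_space_inj[OF finite_S]
  proof eventually_elim
    case (elim x)
    have "real (card (ranking E x bs)) < c \<Longrightarrow> int (card (ranking Estar x bs)) < \<lceil>c\<rceil>"
      using card_ranking_Estar_le[OF elim] by (simp add: less_ceiling_iff)
    then show ?case by (auto simp: tie_broken_card_eq[OF elim])
  qed
  then show ?thesis by (rule finite_measure_mono_AE) measurable
qed

lemma ranking_lower_tail:
  assumes "\<alpha> > 0"
  shows "measure (rank_space S)
      {x \<in> space (rank_space S). real (card (ranking E x bs)) < (1 - 1 / exp 1 - \<alpha>) * real (card Mstar)}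
    < exp (- 2 * \<alpha>\<^sup>2 * real (card Mstar))"
proof (cases "Mstar = {}")
  case False
  let ?n = "real (card Mstar)"
  define c where "c = (1 - 1 / exp 1 - \<alpha>) * ?n"
  define t where "t = (\<integral>x. tie_broken_card x \<partial>rank_space S) - (\<lceil>c\<rceil> - 1)"
  have n: "?n > 0" using False finite_Mstar by (simp add: card_gt_0_iff)
  have "\<lceil>c\<rceil> - 1 < c" by linarith
  moreover have "exp (-1) = 1 / exp (1::real)" by (simp add: exp_minus inverse_eq_divide)
  ultimately have t: "\<alpha> * ?n < t"
    using expectation_tie_broken_card by (simp add: t_def c_def algebra_simps)
  have "measure (rank_space S) {x \<in> space (rank_space S). real (card (ranking E x bs)) < c}
      \<le> measure (rank_space S)
          {x \<in> space (rank_space S). tie_broken_card x \<le> (\<integral>x. tie_broken_card x \<partial>rank_space S) - t}"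
    using measure_card_ranking_less_le[of c] by (simp add: t_def)
  also have "\<dots> \<le> exp (- 2 * t\<^sup>2 / ?n)"
    using t mult_pos_pos[OF assms n] by (intro tie_broken_card_lower_tail False) linarith
  also have "\<dots> < exp (- 2 * \<alpha>\<^sup>2 * ?n)"
    using n assms t by (rule exp_tail_less)
  finally show ?thesis unfolding c_def .
qed simp

end

theorem theorem1:
  fixes S :: "'s set" and B :: "'b set" and E :: "('b \<times> 's) set"
    and bs :: "'b list" and n :: nat and \<alpha> :: real
  assumes "finite S" and "finite B" and "E \<subseteq> B \<times> S"
    and "\<exists>M\<subseteq>E. is_matching M \<and> card M = n"
    and "\<alpha> > 0"
    and "distinct bs" and "set bs = B"
  shows "{x \<in> space (rank_space S).
            real (card (ranking E x bs)) < (1 - 1 / exp 1 - \<alpha>) * real n}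
           \<in> sets (rank_space S)
     \<and> measure (rank_space S)
         {x \<in> space (rank_space S).
            real (card (ranking E x bs)) < (1 - 1 / exp 1 - \<alpha>) * real n}
       < exp (- 2 * \<alpha>\<^sup>2 * real n)"
proof -
  obtain M where M: "M \<subseteq> E" "is_matching M" "card M = n"
    using assms(4) by blast
  have "finite E"
    using assms(1-3) by (meson finite_SigmaI finite_subset)
  interpret ranking_instance S E M bs
    by unfold_locales (use assms M \<open>finite E\<close> in auto)
  have "{x \<in> space (rank_space S). real (card (ranking E x bs)) < (1 - 1 / exp 1 - \<alpha>) * real n}
      \<in> sets (rank_space S)"
    using measurable_card_ranking[OF finite_S sellers_E] by measurable
  then show ?thesis
    using ranking_lower_tail[OF assms(5)] M(3) by simp
qed

end
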